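(* For every integer $p\ge 2$, the loop $C_p$ is isotopically transitive, i.e., its graph $M=\{(u,v,w)\in Q_{2p}^3 : w=u\ast v\}$ is acted on transitively by its autotopy group.
   Context: Let $Q_{2p}=\{x_\zeta : x\in\mathbb{Z}_p,\ \zeta\in\{0,1\}\}$. The loop $C_p$ is the operation on $Q_{2p}$ given by $x_\zeta\ast y_\xi=((-1)^\xi x+y+\zeta\xi)_{\zeta\oplus\xi}$, where the subscript arithmetic is modulo $2$ ($\oplus$) and the other arithmetic is modulo $p$. An isotopism of $Q_{2p}^3$ is a map $(u,v,w)\mapsto(\tau_1u,\tau_2v,\tau_3w)$ with $\tau_i$ permutations of $Q_{2p}$; the autotopy group of $M$ is the group of isotopisms mapping $M$ onto $M$. *)

theory Defs
  imports Main
begin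

text \<open>Elements x_zeta of Q_2p are pairs (x, zeta) with x in Z_p represented by
  {0..<p} and zeta in {0,1} represented by nat.\<close>

definition Q2p :: "int \<Rightarrow> (int \<times> nat) set" where
  "Q2p p = {0..<p} \<times> {0, 1}"

definition Cp :: "int \<Rightarrow> int \<times> nat \<Rightarrow> int \<times> nat \<Rightarrow> int \<times> nat" where
  "Cp p u v = (case u of (x, \<zeta>) \<Rightarrow> case v of (y, \<xi>) \<Rightarrow>
     (((-1) ^ \<xi> * x + y + int (\<zeta> * \<xi>)) mod p, (\<zeta> + \<xi>) mod 2))"

definition Cp_graph :: "int \<Rightarrow> ((int \<times> nat) \<times> (int \<times> nat) \<times> (int \<times> nat)) set" where
  "Cp_graph p = {(u, v, w). u \<in> Q2p p \<and> v \<in> Q2p p \<and> w = Cp p u v}"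

definition is_autotopy ::
  "'a set \<Rightarrow> ('a \<times> 'a \<times> 'a) set \<Rightarrow> ('a \<Rightarrow> 'a) \<Rightarrow> ('a \<Rightarrow> 'a) \<Rightarrow> ('a \<Rightarrow> 'a) \<Rightarrow> bool" where
  "is_autotopy Q M \<tau>1 \<tau>2 \<tau>3 \<longleftrightarrow>
     bij_betw \<tau>1 Q Q \<and> bij_betw \<tau>2 Q Q \<and> bij_betw \<tau>3 Q Q \<and>
     (\<lambda>(u, v, w). (\<tau>1 u, \<tau>2 v, \<tau>3 w)) ` M = M"

definition isotopically_transitive :: "'a set \<Rightarrow> ('a \<times> 'a \<times> 'a) set \<Rightarrow> bool" where
  "isotopically_transitive Q M \<longleftrightarrow>
     (\<forall>t\<in>M. \<forall>t'\<in>M. \<exists>\<tau>1 \<tau>2 \<tau>3. is_autotopy Q M \<tau>1 \<tau>2 \<tau>3 \<and>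
        (case t of (u, v, w) \<Rightarrow> (\<tau>1 u, \<tau>2 v, \<tau>3 w)) = t')"

end

theory Submission
  imports Defs
begin

text \<open>Autotopies of the graph of an operation form a group, so it suffices to move the base triple
  (0_0, 0_0, 0_0) to an arbitrary triple (a_\<zeta>, b_\<xi>, a_\<zeta> * b_\<xi>); an autotopism of the operation
  is determined on the third coordinate by the first two. For each of the four parity patterns
  (\<zeta>, \<xi>) an explicit triple of maps x_\<eta> \<mapsto> (\<plusminus>x + g_\<eta>)_(\<eta> \<oplus> \<pi>) does this. Since all these maps
  and C_p itself are reductions mod p of integer formulas, the autotopism identity only has to be
  checked over \<int>, where it is a polynomial identity.\<close>

definition op_graph :: "'a set \<Rightarrow> ('a \<Rightarrow> 'a \<Rightarrow> 'a) \<Rightarrow> ('a \<times> 'a \<times> 'a) set" where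
  "op_graph Q f = {(u, v, w). u \<in> Q \<and> v \<in> Q \<and> w = f u v}"

definition autotopism :: "'a set \<Rightarrow> ('a \<Rightarrow> 'a \<Rightarrow> 'a) \<Rightarrow> ('a \<Rightarrow> 'a) \<Rightarrow> ('a \<Rightarrow> 'a) \<Rightarrow> ('a \<Rightarrow> 'a) \<Rightarrow> bool" where
  "autotopism Q f \<alpha> \<beta> \<gamma> \<longleftrightarrow>
     bij_betw \<alpha> Q Q \<and> bij_betw \<beta> Q Q \<and> bij_betw \<gamma> Q Q \<and>
     (\<forall>u\<in>Q. \<forall>v\<in>Q. \<gamma> (f u v) = f (\<alpha> u) (\<beta> v))"

lemma is_autotopy_comp:
  assumes "is_autotopy Q M \<alpha> \<beta> \<gamma>" and "is_autotopy Q M \<alpha>' \<beta>' \<gamma>'"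
  shows "is_autotopy Q M (\<alpha>' \<circ> \<alpha>) (\<beta>' \<circ> \<beta>) (\<gamma>' \<circ> \<gamma>)"
proof -
  have "(\<lambda>(u, v, w). ((\<alpha>' \<circ> \<alpha>) u, (\<beta>' \<circ> \<beta>) v, (\<gamma>' \<circ> \<gamma>) w)) ` M
      = (\<lambda>(u, v, w). (\<alpha>' u, \<beta>' v, \<gamma>' w)) ` (\<lambda>(u, v, w). (\<alpha> u, \<beta> v, \<gamma> w)) ` M"
    by (simp add: image_image case_prod_beta)
  with assms show ?thesis
    by (auto simp: is_autotopy_def intro: bij_betw_trans)
qed

lemma is_autotopy_inv_into:
  assumes aut: "is_autotopy Q M \<alpha> \<beta> \<gamma>" and M: "M \<subseteq> Q \<times> Q \<times> Q"
  shows "is_autotopy Q M (inv_into Q \<alpha>) (inv_into Q \<beta>) (inv_into Q \<gamma>)"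
proof -
  let ?T = "\<lambda>(u, v, w). (\<alpha> u, \<beta> v, \<gamma> w)"
  let ?S = "\<lambda>(u, v, w). (inv_into Q \<alpha> u, inv_into Q \<beta> v, inv_into Q \<gamma> w)"
  have bij: "bij_betw \<alpha> Q Q" "bij_betw \<beta> Q Q" "bij_betw \<gamma> Q Q"
    using aut by (simp_all add: is_autotopy_def)
  have "?S (?T t) = t" if "t \<in> M" for t
    using that M bij by (auto simp: bij_betw_def)
  then have "?S ` ?T ` M = M"
    by (force simp: image_comp)
  then show ?thesis
    using aut bij by (simp add: is_autotopy_def bij_betw_inv_into)
qed

lemma isotopically_transitiveI:
  assumes M: "M \<subseteq> Q \<times> Q \<times> Q" and "t0 \<in> M"
    and reach: "\<And>t. t \<in> M \<Longrightarrow> \<exists>\<alpha> \<beta> \<gamma>. is_autotopy Q M \<alpha> \<beta> \<gamma> \<and>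
                   (case t0 of (u, v, w) \<Rightarrow> (\<alpha> u, \<beta> v, \<gamma> w)) = t"
  shows "isotopically_transitive Q M"
  unfolding isotopically_transitive_def
proof (intro ballI)
  fix t t' assume "t \<in> M" "t' \<in> M"
  obtain u0 v0 w0 where t0: "t0 = (u0, v0, w0)" "u0 \<in> Q" "v0 \<in> Q" "w0 \<in> Q"
    using \<open>t0 \<in> M\<close> M by auto
  obtain \<alpha> \<beta> \<gamma> where aut: "is_autotopy Q M \<alpha> \<beta> \<gamma>" and t: "t = (\<alpha> u0, \<beta> v0, \<gamma> w0)"
    using reach[OF \<open>t \<in> M\<close>] t0 by auto
  obtain \<alpha>' \<beta>' \<gamma>' where aut': "is_autotopy Q M \<alpha>' \<beta>' \<gamma>'"
    and t': "t' = (\<alpha>' u0, \<beta>' v0, \<gamma>' w0)"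
    using reach[OF \<open>t' \<in> M\<close>] t0 by auto
  have "is_autotopy Q M (\<alpha>' \<circ> inv_into Q \<alpha>) (\<beta>' \<circ> inv_into Q \<beta>) (\<gamma>' \<circ> inv_into Q \<gamma>)"
    using is_autotopy_comp[OF is_autotopy_inv_into[OF aut M] aut'] .
  moreover have "inv_into Q \<alpha> (\<alpha> u0) = u0" "inv_into Q \<beta> (\<beta> v0) = v0" "inv_into Q \<gamma> (\<gamma> w0) = w0"
    using aut t0 by (auto simp: is_autotopy_def bij_betw_def)
  ultimately show "\<exists>\<tau>1 \<tau>2 \<tau>3. is_autotopy Q M \<tau>1 \<tau>2 \<tau>3 \<and>
                     (case t of (u, v, w) \<Rightarrow> (\<tau>1 u, \<tau>2 v, \<tau>3 w)) = t'"
    unfolding t t' by fastforce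
qed

lemma is_autotopy_op_graph:
  assumes "autotopism Q f \<alpha> \<beta> \<gamma>"
  shows "is_autotopy Q (op_graph Q f) \<alpha> \<beta> \<gamma>"
proof -
  have bij: "bij_betw \<alpha> Q Q" "bij_betw \<beta> Q Q" "bij_betw \<gamma> Q Q"
    and hom: "\<And>u v. u \<in> Q \<Longrightarrow> v \<in> Q \<Longrightarrow> \<gamma> (f u v) = f (\<alpha> u) (\<beta> v)"
    using assms by (auto simp: autotopism_def)
  have "(\<lambda>(u, v, w). (\<alpha> u, \<beta> v, \<gamma> w)) ` op_graph Q f
      = (\<lambda>(u, v). (\<alpha> u, \<beta> v, f (\<alpha> u) (\<beta> v))) ` (Q \<times> Q)"
    by (force simp: op_graph_def hom)
  also have "\<dots> = (\<lambda>(u, v). (u, v, f u v)) ` ((\<lambda>(u, v). (\<alpha> u, \<beta> v)) ` (Q \<times> Q))"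
    by (simp add: image_image case_prod_beta)
  also have "(\<lambda>(u, v). (\<alpha> u, \<beta> v)) ` (Q \<times> Q) = Q \<times> Q"
    using bij by (simp add: bij_betw_def map_prod_surj_on[unfolded map_prod_def])
  finally show ?thesis
    using bij by (auto simp: is_autotopy_def op_graph_def)
qed

lemma isotopically_transitive_op_graphI:
  assumes "e \<in> Q"
    and closed: "\<And>u v. u \<in> Q \<Longrightarrow> v \<in> Q \<Longrightarrow> f u v \<in> Q"
    and reach: "\<And>a b. a \<in> Q \<Longrightarrow> b \<in> Q \<Longrightarrow> \<exists>\<alpha> \<beta> \<gamma>. autotopism Q f \<alpha> \<beta> \<gamma> \<and> \<alpha> e = a \<and> \<beta> e = b"
  shows "isotopically_transitive Q (op_graph Q f)"
proof (rule isotopically_transitiveI)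
  show "op_graph Q f \<subseteq> Q \<times> Q \<times> Q" and "(e, e, f e e) \<in> op_graph Q f"
    using \<open>e \<in> Q\<close> closed by (auto simp: op_graph_def)
next
  fix t assume "t \<in> op_graph Q f"
  then obtain a b where "a \<in> Q" "b \<in> Q" and t: "t = (a, b, f a b)"
    by (auto simp: op_graph_def)
  then obtain \<alpha> \<beta> \<gamma> where aut: "autotopism Q f \<alpha> \<beta> \<gamma>" and "\<alpha> e = a" "\<beta> e = b"
    using reach by blast
  then have "\<gamma> (f e e) = f a b"
    using \<open>e \<in> Q\<close> by (simp add: autotopism_def)
  then show "\<exists>\<alpha> \<beta> \<gamma>. is_autotopy Q (op_graph Q f) \<alpha> \<beta> \<gamma> \<and>
               (case (e, e, f e e) of (u, v, w) \<Rightarrow> (\<alpha> u, \<beta> v, \<gamma> w)) = t"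
    using is_autotopy_op_graph[OF aut] \<open>\<alpha> e = a\<close> \<open>\<beta> e = b\<close> t by auto
qed

definition Cp_int :: "int \<times> nat \<Rightarrow> int \<times> nat \<Rightarrow> int \<times> nat" where
  "Cp_int u v = (case u of (x, \<zeta>) \<Rightarrow> case v of (y, \<xi>) \<Rightarrow>
     ((-1) ^ \<xi> * x + y + int (\<zeta> * \<xi>), (\<zeta> + \<xi>) mod 2))"

definition Q2p_reduce :: "int \<Rightarrow> int \<times> nat \<Rightarrow> int \<times> nat" where
  "Q2p_reduce p u = (fst u mod p, snd u)"

definition affine_int :: "int \<Rightarrow> int \<Rightarrow> int \<Rightarrow> nat \<Rightarrow> int \<times> nat \<Rightarrow> int \<times> nat" where
  "affine_int s g0 g1 \<pi> u = (s * fst u + (if snd u = 0 then g0 else g1), (snd u + \<pi>) mod 2)"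

lemma Cp_eq_Q2p_reduce_Cp_int: "Cp p u v = Q2p_reduce p (Cp_int u v)"
  by (simp add: Cp_def Cp_int_def Q2p_reduce_def split: prod.split)

lemma Cp_Q2p_reduce: "Cp p (Q2p_reduce p u) (Q2p_reduce p v) = Cp p u v"
  by (auto simp: Cp_def Q2p_reduce_def split: prod.split intro!: mod_add_cong mod_mult_cong)

lemma Q2p_reduce_affine_int_Q2p_reduce:
  "Q2p_reduce p (affine_int s g0 g1 \<pi> (Q2p_reduce p u)) = Q2p_reduce p (affine_int s g0 g1 \<pi> u)"
  by (auto simp: Q2p_reduce_def affine_int_def intro!: mod_add_cong mod_mult_cong)

lemma Cp_in_Q2p:
  assumes "p > 0"
  shows "Cp p u v \<in> Q2p p"
  using assms by (auto simp: Cp_def Q2p_def split: prod.split)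

lemma Cp_hom_if_Cp_int_hom:
  assumes hom: "\<And>x y \<zeta> \<xi>. \<zeta> \<in> {0, 1} \<Longrightarrow> \<xi> \<in> {0, 1} \<Longrightarrow>
                  \<gamma> (Cp_int (x, \<zeta>) (y, \<xi>)) = Cp_int (\<alpha> (x, \<zeta>)) (\<beta> (y, \<xi>))"
    and \<gamma>_reduce: "\<And>w. Q2p_reduce p (\<gamma> (Q2p_reduce p w)) = Q2p_reduce p (\<gamma> w)"
    and "u \<in> Q2p p" "v \<in> Q2p p"
  shows "Q2p_reduce p (\<gamma> (Cp p u v)) = Cp p (Q2p_reduce p (\<alpha> u)) (Q2p_reduce p (\<beta> v))"
proof -
  have "Q2p_reduce p (\<gamma> (Cp p u v)) = Q2p_reduce p (\<gamma> (Cp_int u v))"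
    by (simp add: Cp_eq_Q2p_reduce_Cp_int \<gamma>_reduce)
  also have "\<dots> = Q2p_reduce p (Cp_int (\<alpha> u) (\<beta> v))"
    using \<open>u \<in> Q2p p\<close> \<open>v \<in> Q2p p\<close> hom by (auto simp: Q2p_def)
  also have "\<dots> = Cp p (Q2p_reduce p (\<alpha> u)) (Q2p_reduce p (\<beta> v))"
    by (simp add: Cp_eq_Q2p_reduce_Cp_int[symmetric] Cp_Q2p_reduce)
  finally show ?thesis .
qed

lemma bij_betw_Q2p_affine:
  assumes "p > 0" and s: "s \<in> {1, -1}" and "\<pi> \<in> {0, 1}"
  shows "bij_betw (Q2p_reduce p \<circ> affine_int s g0 g1 \<pi>) (Q2p p) (Q2p p)"
proof -
  let ?f = "Q2p_reduce p \<circ> affine_int s g0 g1 \<pi>"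
  have into: "?f ` Q2p p \<subseteq> Q2p p"
    using assms by (auto simp: Q2p_def Q2p_reduce_def affine_int_def)
  have inj: "inj_on ?f (Q2p p)"
  proof (rule inj_onI)
    fix u v assume "u \<in> Q2p p" "v \<in> Q2p p" and eq: "?f u = ?f v"
    then obtain x y \<zeta> where u: "u = (x, \<zeta>)" and v: "v = (y, \<zeta>)"
      and x: "x \<in> {0..<p}" and y: "y \<in> {0..<p}"
      using \<open>\<pi> \<in> {0, 1}\<close> by (auto simp: Q2p_def Q2p_reduce_def affine_int_def)
    define g where "g = (if \<zeta> = 0 then g0 else g1)"
    have "(s * x + g) mod p = (s * y + g) mod p"
      using eq by (simp add: u v g_def Q2p_reduce_def affine_int_def)
    then have "(s * x + g - g) mod p = (s * y + g - g) mod p"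
      by (rule mod_diff_cong) simp
    then have "(s * x) mod p = (s * y) mod p"
      by simp
    then have "x mod p = y mod p"
      using s by (auto dest: mod_minus_cong)
    then show "u = v"
      using x y by (simp add: u v)
  qed
  have "finite (Q2p p)"
    by (simp add: Q2p_def)
  then show ?thesis
    using endo_inj_surj[OF _ into inj] inj by (simp add: bij_betw_def)
qed

lemma autotopism_Q2p_affine:
  assumes "p > 0"
    and "s1 \<in> {1, -1}" "s2 \<in> {1, -1}" "s3 \<in> {1, -1}"
    and "\<pi>1 \<in> {0, 1}" "\<pi>2 \<in> {0, 1}" "\<pi>3 \<in> {0, 1}"
    and hom: "\<And>x y \<zeta> \<xi>. \<zeta> \<in> {0, 1} \<Longrightarrow> \<xi> \<in> {0, 1} \<Longrightarrow>
      affine_int s3 g3 h3 \<pi>3 (Cp_int (x, \<zeta>) (y, \<xi>))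
        = Cp_int (affine_int s1 g1 h1 \<pi>1 (x, \<zeta>)) (affine_int s2 g2 h2 \<pi>2 (y, \<xi>))"
  shows "autotopism (Q2p p) (Cp p) (Q2p_reduce p \<circ> affine_int s1 g1 h1 \<pi>1)
           (Q2p_reduce p \<circ> affine_int s2 g2 h2 \<pi>2) (Q2p_reduce p \<circ> affine_int s3 g3 h3 \<pi>3)"
  using assms Cp_hom_if_Cp_int_hom[where \<gamma> = "affine_int s3 g3 h3 \<pi>3" and \<alpha> = "affine_int s1 g1 h1 \<pi>1"
      and \<beta> = "affine_int s2 g2 h2 \<pi>2", OF hom]
  by (simp add: autotopism_def bij_betw_Q2p_affine Q2p_reduce_affine_int_Q2p_reduce)

lemma Cp_autotopism_from_origin:
  assumes "p > 0" and "(a, \<zeta>) \<in> Q2p p" and "(b, \<xi>) \<in> Q2p p"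
  shows "\<exists>\<alpha> \<beta> \<gamma>. autotopism (Q2p p) (Cp p) \<alpha> \<beta> \<gamma> \<and> \<alpha> (0, 0) = (a, \<zeta>) \<and> \<beta> (0, 0) = (b, \<xi>)"
proof -
  have a: "a mod p = a" and b: "b mod p = b" and "\<zeta> \<in> {0, 1}" "\<xi> \<in> {0, 1}"
    using assms by (auto simp: Q2p_def)
  then consider "\<zeta> = 0" "\<xi> = 0" | "\<zeta> = 1" "\<xi> = 0" | "\<zeta> = 0" "\<xi> = 1" | "\<zeta> = 1" "\<xi> = 1"
    by blast
  then show ?thesis
  proof cases
    case 1
    have "autotopism (Q2p p) (Cp p) (Q2p_reduce p \<circ> affine_int 1 a a 0)
            (Q2p_reduce p \<circ> affine_int 1 b (b + 2 * a) 0) (Q2p_reduce p \<circ> affine_int 1 (a + b) (a + b) 0)"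
      using \<open>p > 0\<close> by (intro autotopism_Q2p_affine) (auto simp: affine_int_def Cp_int_def)
    with 1 a b show ?thesis
      by (fastforce simp: Q2p_reduce_def affine_int_def)
  next
    case 2
    have "autotopism (Q2p p) (Cp p) (Q2p_reduce p \<circ> affine_int (-1) a 0 1)
            (Q2p_reduce p \<circ> affine_int (-1) b (a + b - 1) 0) (Q2p_reduce p \<circ> affine_int (-1) (a + b) b 1)"
      using \<open>p > 0\<close> by (intro autotopism_Q2p_affine) (auto simp: affine_int_def Cp_int_def)
    with 2 a b show ?thesis
      by (fastforce simp: Q2p_reduce_def affine_int_def)
  next
    case 3
    have "autotopism (Q2p p) (Cp p) (Q2p_reduce p \<circ> affine_int (-1) a 0 0)
            (Q2p_reduce p \<circ> affine_int 1 b (1 + b - a) 1) (Q2p_reduce p \<circ> affine_int 1 (b - a) (1 + b) 1)"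
      using \<open>p > 0\<close> by (intro autotopism_Q2p_affine) (auto simp: affine_int_def Cp_int_def)
    with 3 a b show ?thesis
      by (fastforce simp: Q2p_reduce_def affine_int_def)
  next
    case 4
    have "autotopism (Q2p p) (Cp p) (Q2p_reduce p \<circ> affine_int 1 a 0 1)
            (Q2p_reduce p \<circ> affine_int (-1) b (b - a) 1) (Q2p_reduce p \<circ> affine_int (-1) (b - a + 1) b 0)"
      using \<open>p > 0\<close> by (intro autotopism_Q2p_affine) (auto simp: affine_int_def Cp_int_def)
    with 4 a b show ?thesis
      by (fastforce simp: Q2p_reduce_def affine_int_def)
  qed
qed

theorem proposition6:
  fixes p :: int
  assumes "p \<ge> 2"
  shows "isotopically_transitive (Q2p p) (Cp_graph p)"
proof -
  have "p > 0"
    using assms by simp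
  have "Cp_graph p = op_graph (Q2p p) (Cp p)"
    by (simp add: Cp_graph_def op_graph_def)
  moreover have "isotopically_transitive (Q2p p) (op_graph (Q2p p) (Cp p))"
  proof (rule isotopically_transitive_op_graphI)
    show "(0, 0) \<in> Q2p p"
      using \<open>p > 0\<close> by (simp add: Q2p_def)
  qed (use \<open>p > 0\<close> Cp_in_Q2p Cp_autotopism_from_origin in auto)
  ultimately show ?thesis
    by simp
qed

end
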